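(* Suppose $Y=X\beta^*\in\mathbb{R}$, where $X\in\mathbb{R}^{1\times p}$ is a jointly continuous random vector and, for every $i\in[p]$, $\beta_i^*\in\mathcal{S}=\{a_1,\dots,a_{\mathcal{R}}\}$, where $\mathcal{S}$ is a rationally independent set known to the learner. Then the IHDR algorithm with input $(Y,\mathcal{S},X)$ terminates with $\hat\beta^*=\beta^*$ with probability $1$, after at most polynomial in $p$ and $\mathcal{R}$ arithmetic operations on real numbers.
   Context: A random vector $X\in\mathbb{R}^p$ is jointly continuous if it has a joint density with respect to Lebesgue measure on $\mathbb{R}^p$. A finite set $\{a_1,\dots,a_k\}\subset\mathbb{R}$ is rationally independent if $\sum q_ia_i=0$ with $q_i\in\mathbb{Q}$ implies all $q_i=0$. An integer relation for $b\in\mathbb{R}^k$ is a nonzero $m\in\mathbb{Z}^k$ with $\langle b,m\rangle=0$. IRA (integer relation algorithm, e.g. PSLQ): given $b\in\mathbb{R}^k$ admitting an integer relation, it outputs an integer relation for $b$ after $O(k^3+k^2\log\|m\|)$ arithmetic operations on reals, where $m$ is an integer relation of smallest Euclidean norm. IHDR algorithm on input $(Y,\mathcal{S},X)$: (1) form $\mathcal{L}=(X_ia_j:i\in[p],j\in[\mathcal{R}])$; (2) run IRA on $(Y,\mathcal{L})$, with output $(b_0,b_{ij}:i\in[p],j\in[\mathcal{R}])$ ($b_0$ the coefficient of $Y$, $b_{ij}$ that of $X_ia_j$); (3) if $b_0=0$ output $\hat\beta^*=0$; (4) otherwise, for each $i\in[p]$ set $\hat\beta^*_i=a_{j(i)}$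 where $j(i)$ is the smallest $j\in[\mathcal{R}]$ with $b_{ij}\neq0$; output $\hat\beta^*$. *)

theory Defs
  imports "HOL-Probability.Probability"
begin

text \<open>Finite families are indexed by natural numbers: a vector in R^k is a function
  nat => real of which only the entries at indices < k matter.\<close>

definition rationally_independent :: "(nat \<Rightarrow> real) \<Rightarrow> nat \<Rightarrow> bool" where
  "rationally_independent a R \<longleftrightarrow>
     (\<forall>q :: nat \<Rightarrow> real. (\<forall>j<R. q j \<in> \<rat>) \<and> (\<Sum>j<R. q j * a j) = 0 \<longrightarrow> (\<forall>j<R. q j = 0))"

definition is_int_relation :: "(nat \<Rightarrow> real) \<Rightarrow> nat \<Rightarrow> (nat \<Rightarrow> int) \<Rightarrow> bool" where
  "is_int_relation b k m \<longleftrightarrow> (\<exists>i<k. m i \<noteq> 0) \<and> (\<Sum>i<k. of_int (m i) * b i) = 0"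

definition has_int_relation :: "(nat \<Rightarrow> real) \<Rightarrow> nat \<Rightarrow> bool" where
  "has_int_relation b k \<longleftrightarrow> (\<exists>m. is_int_relation b k m)"

definition min_relation_norm :: "(nat \<Rightarrow> real) \<Rightarrow> nat \<Rightarrow> real" where
  "min_relation_norm b k = Inf {sqrt (\<Sum>i<k. (of_int (m i))\<^sup>2) | m. is_int_relation b k m}"

text \<open>Specification of an integer relation algorithm (e.g. PSLQ): an output function and a
  count of arithmetic operations on reals, with a constant C from the O-bound.\<close>
definition is_IRA :: "((nat \<Rightarrow> real) \<Rightarrow> nat \<Rightarrow> (nat \<Rightarrow> int)) \<Rightarrow>
                      ((nat \<Rightarrow> real) \<Rightarrow> nat \<Rightarrow> real) \<Rightarrow> real \<Rightarrow> bool" where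
  "is_IRA ira ira_cost C \<longleftrightarrow>
     (\<forall>b k. has_int_relation b k \<longrightarrow>
        is_int_relation b k (ira b k) \<and>
        ira_cost b k \<le> C * (real k ^ 3 + (real k)\<^sup>2 * ln (min_relation_norm b k)))"

text \<open>Step (1): the input vector (Y, X_i a_j) of length p*R+1; entry 0 is Y and
  entry 1 + i*R + j is X_i a_j (i < p, j < R).\<close>
definition ihdr_input :: "nat \<Rightarrow> nat \<Rightarrow> (nat \<Rightarrow> real) \<Rightarrow> real \<Rightarrow> (nat \<Rightarrow> real) \<Rightarrow> nat \<Rightarrow> real" where
  "ihdr_input p R a y x n =
     (if n = 0 then y else x ((n - 1) div R) * a ((n - 1) mod R))"

definition ihdr_decode :: "nat \<Rightarrow> (nat \<Rightarrow> real) \<Rightarrow> (nat \<Rightarrow> int) \<Rightarrow> nat \<Rightarrow> real" where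
  "ihdr_decode R a b i =
     (if b 0 = 0 then 0 else a (LEAST j. j < R \<and> b (1 + i * R + j) \<noteq> 0))"

definition ihdr :: "((nat \<Rightarrow> real) \<Rightarrow> nat \<Rightarrow> (nat \<Rightarrow> int)) \<Rightarrow>
     nat \<Rightarrow> nat \<Rightarrow> (nat \<Rightarrow> real) \<Rightarrow> real \<Rightarrow> (nat \<Rightarrow> real) \<Rightarrow> nat \<Rightarrow> real" where
  "ihdr ira p R a y x = ihdr_decode R a (ira (ihdr_input p R a y x) (p * R + 1))"

text \<open>Number of arithmetic operations on reals: p*R products to form L, the IRA run,
  and at most p*R further steps in the decoding.\<close>
definition ihdr_cost :: "((nat \<Rightarrow> real) \<Rightarrow> nat \<Rightarrow> real) \<Rightarrow>
     nat \<Rightarrow> nat \<Rightarrow> (nat \<Rightarrow> real) \<Rightarrow> real \<Rightarrow> (nat \<Rightarrow> real) \<Rightarrow> real" where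
  "ihdr_cost ira_cost p R a y x =
     real (p * R) + ira_cost (ihdr_input p R a y x) (p * R + 1) + real (p * R)"

end

theory Submission
  imports Defs
begin

text \<open>Let \<open>b = (Y, X\<^sub>i a\<^sub>j)\<close> be the input of the integer relation algorithm, with
  \<open>Y = \<Sum>\<^sub>i X\<^sub>i \<beta>\<^sub>i\<close>. For an integer vector \<open>m\<close>, \<open>\<langle>b, m\<rangle> = \<Sum>\<^sub>i X\<^sub>i c\<^sub>i(m)\<close> where
  \<open>c\<^sub>i(m) = m\<^sub>0 \<beta>\<^sub>i + \<Sum>\<^sub>j m\<^sub>i\<^sub>j a\<^sub>j\<close>. There are countably many \<open>m\<close>, and for each with
  \<open>c(m) \<noteq> 0\<close> the hyperplane \<open>\<Sum>\<^sub>i x\<^sub>i c\<^sub>i(m) = 0\<close> is Lebesgue-null; as \<open>X\<close> has a density,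
  almost surely every integer relation of \<open>b\<close> has \<open>c(m) = 0\<close>. Since \<open>\<beta>\<^sub>i\<close> is one of the
  rationally independent \<open>a\<^sub>j\<close>, \<open>c\<^sub>i(m) = 0\<close> forces \<open>m\<^sub>i\<^sub>j = -m\<^sub>0\<close> for the \<open>j\<close> with
  \<open>\<beta>\<^sub>i = a\<^sub>j\<close> and \<open>m\<^sub>i\<^sub>j = 0\<close> otherwise; hence \<open>m\<^sub>0 \<noteq> 0\<close> and decoding returns \<open>\<beta>\<close>.
  For the cost, the relation \<open>m\<^sub>0 = -1\<close>, \<open>m\<^sub>i\<^sub>j = [\<beta>\<^sub>i = a\<^sub>j]\<close> has entries in \<open>{-1,0,1}\<close>,
  so the shortest relation has norm at most \<open>\<surd>k\<close> (\<open>k = pR + 1\<close>) and the IRA bound is \<open>O(k\<^sup>3)\<close>.\<close>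

lemma AE_PiM_lborel_linear_form_neq_0:
  fixes c :: "'i \<Rightarrow> real"
  assumes "finite I" "i0 \<in> I" "c i0 \<noteq> 0"
  shows "AE x in PiM I (\<lambda>_. lborel). (\<Sum>i\<in>I. x i * c i) \<noteq> 0"
proof -
  let ?N = "PiM I (\<lambda>_. lborel :: real measure)"
  let ?I = "I - {i0}"
  interpret product_sigma_finite "\<lambda>_. lborel :: real measure" by standard
  define H where "H = {x \<in> space ?N. (\<Sum>i\<in>I. x i * c i) = 0}"
  have H_sets: "H \<in> sets ?N" unfolding H_def by measurable
  have fibre_null: "(\<integral>\<^sup>+ y. indicator H (x(i0 := y)) \<partial>lborel) = 0" for x :: "'i \<Rightarrow> real"
  proof -
    define v where "v = - (\<Sum>i\<in>?I. x i * c i) / c i0"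
    have "indicator H (x(i0 := y)) \<le> (indicator {v} y :: ennreal)" for y
    proof (cases "x(i0 := y) \<in> H")
      case True
      have "(\<Sum>i\<in>I. (x(i0 := y)) i * c i) = y * c i0 + (\<Sum>i\<in>?I. x i * c i)"
        using assms(1,2) by (simp add: sum.remove[of I i0])
      with True have "y = v"
        unfolding H_def v_def using assms(3) by (simp add: field_simps)
      then show ?thesis using True by simp
    qed simp
    then have "(\<integral>\<^sup>+ y. indicator H (x(i0 := y)) \<partial>lborel) \<le> (\<integral>\<^sup>+ y. indicator {v} y \<partial>lborel)"
      by (rule nn_integral_mono)
    then show ?thesis by simp
  qed
  have "emeasure ?N H = (\<integral>\<^sup>+ x. indicator H x \<partial>?N)"
    using H_sets by simp
  also have "\<dots> = (\<integral>\<^sup>+ x. (\<integral>\<^sup>+ y. indicator H (x(i0 := y)) \<partial>lborel) \<partial>PiM ?I (\<lambda>_. lborel))"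
    using product_nn_integral_insert[of ?I i0 "indicator H"] H_sets assms(1,2)
    by (simp add: insert_absorb)
  also have "\<dots> = 0"
    by (simp add: fibre_null)
  finally have "H \<in> null_sets ?N"
    using H_sets by auto
  then show ?thesis
    by (rule AE_I') (auto simp: H_def)
qed

lemma AE_distributed_of_AE:
  assumes "distributed M N X f" "AE x in N. P x"
  shows "AE \<omega> in M. P (X \<omega>)"
proof -
  have "AE x in density N f. P x"
    using assms by (auto simp: AE_density distributed_borel_measurable elim: eventually_mono)
  then have "AE x in distr M N X. P x"
    unfolding distributed_distr_eq_density[OF assms(1)] .
  then show ?thesis
    using distributed_measurable[OF assms(1)] by (rule AE_distrD[rotated])
qed

lemma AE_distributed_linear_forms_vanish:
  fixes X :: "'w \<Rightarrow> 'i \<Rightarrow> real" and C :: "('i \<Rightarrow> real) set"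
  assumes "distributed M (PiM I (\<lambda>_. lborel)) X f" "finite I" "countable C"
  shows "AE \<omega> in M. \<forall>c\<in>C. (\<Sum>i\<in>I. X \<omega> i * c i) = 0 \<longrightarrow> (\<forall>i\<in>I. c i = 0)"
proof (rule AE_ball_countable'[OF _ assms(3)])
  fix c assume "c \<in> C"
  show "AE \<omega> in M. (\<Sum>i\<in>I. X \<omega> i * c i) = 0 \<longrightarrow> (\<forall>i\<in>I. c i = 0)"
  proof (cases "\<forall>i\<in>I. c i = 0")
    case False
    then obtain i0 where "i0 \<in> I" "c i0 \<noteq> 0" by blast
    with assms(2) have "AE x in PiM I (\<lambda>_. lborel). (\<Sum>i\<in>I. x i * c i) \<noteq> 0"
      by (rule AE_PiM_lborel_linear_form_neq_0)
    with assms(1) have "AE \<omega> in M. (\<Sum>i\<in>I. X \<omega> i * c i) \<noteq> 0"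
      by (rule AE_distributed_of_AE)
    then show ?thesis
      by (rule eventually_mono) simp
  qed simp
qed

lemma sum_lessThan_mult_blocks:
  fixes g :: "nat \<Rightarrow> 'b::comm_monoid_add"
  shows "(\<Sum>n<p * R. g n) = (\<Sum>i<p. \<Sum>j<R. g (i * R + j))"
proof -
  have "(\<Sum>n\<in>{i * R..<i * R + R}. g n) = (\<Sum>j<R. g (i * R + j))" for i
    using sum.shift_bounds_nat_ivl[of g 0 "i * R" R]
    by (simp add: lessThan_atLeast0 add.commute)
  then show ?thesis
    using sum.nat_group[of g R p] by simp
qed

lemma ihdr_input_index_cases:
  fixes n p R :: nat
  assumes "n < p * R + 1"
  obtains "n = 0" | i j where "i < p" "j < R" "n = 1 + i * R + j"
proof (cases "n = 0")
  case False
  with assms have "n - 1 < p * R" by simp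
  then have "0 < R" by (cases "R = 0") auto
  with \<open>n - 1 < p * R\<close> have "(n - 1) div R < p" "(n - 1) mod R < R"
    by (simp_all add: div_less_iff_less_mult)
  moreover have "n = 1 + (n - 1) div R * R + (n - 1) mod R"
    using False by simp
  ultimately show thesis by (rule that(2))
qed simp

text \<open>\<open>ihdr_coeff R a \<beta> m i\<close> is \<open>c\<^sub>i(m)\<close>; entry \<open>m\<^sub>i\<^sub>j\<close> sits at index \<open>1 + iR + j\<close>.\<close>

definition ihdr_coeff :: "nat \<Rightarrow> (nat \<Rightarrow> real) \<Rightarrow> (nat \<Rightarrow> real) \<Rightarrow> (nat \<Rightarrow> int) \<Rightarrow> nat \<Rightarrow> real" where
  "ihdr_coeff R a beta m i = of_int (m 0) * beta i + (\<Sum>j<R. of_int (m (1 + i * R + j)) * a j)"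

lemma sum_ihdr_input_eq_linear_form:
  "(\<Sum>n<p * R + 1. of_int (m n) * ihdr_input p R a (\<Sum>i<p. x i * beta i) x n)
     = (\<Sum>i<p. x i * ihdr_coeff R a beta m i)"
proof -
  have "(\<Sum>n<p * R + 1. of_int (m n) * ihdr_input p R a (\<Sum>i<p. x i * beta i) x n)
      = of_int (m 0) * (\<Sum>i<p. x i * beta i)
        + (\<Sum>n<p * R. of_int (m (Suc n)) * (x (n div R) * a (n mod R)))"
    unfolding Suc_eq_plus1[symmetric] sum.lessThan_Suc_shift by (simp add: ihdr_input_def)
  also have "(\<Sum>n<p * R. of_int (m (Suc n)) * (x (n div R) * a (n mod R)))
      = (\<Sum>i<p. \<Sum>j<R. of_int (m (1 + i * R + j)) * (x i * a j))"
    by (simp add: sum_lessThan_mult_blocks)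
  finally show ?thesis
    by (simp add: ihdr_coeff_def sum_distrib_left distrib_left sum.distrib mult_ac)
qed

lemma block_index_less:
  fixes i j p R :: nat
  assumes "i < p" "j < R"
  shows "i * R + j < p * R"
proof -
  have "i * R + j < Suc i * R"
    using assms(2) by simp
  also have "\<dots> \<le> p * R"
    using assms(1) by (intro mult_le_mono1) simp
  finally show ?thesis .
qed

lemma ihdr_coeff_restrict:
  assumes "i < p"
  shows "ihdr_coeff R a beta (restrict m {..<p * R + 1}) i = ihdr_coeff R a beta m i"
  using block_index_less[OF assms] unfolding ihdr_coeff_def by (auto intro!: sum.cong)

lemma ihdr_coeff_eq_0_block:
  assumes "rationally_independent a R" "j0 < R" "beta i = a j0"
    and "ihdr_coeff R a beta m i = 0" "j < R"
  shows "m (1 + i * R + j) = (if j = j0 then - m 0 else 0)"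
proof -
  define q :: "nat \<Rightarrow> real" where
    "q j = of_int (m (1 + i * R + j)) + (if j = j0 then of_int (m 0) else 0)" for j
  have "(\<Sum>j<R. q j * a j) = ihdr_coeff R a beta m i"
    using assms(2,3)
    by (simp add: q_def ihdr_coeff_def distrib_right sum.distrib if_distrib[of "\<lambda>t. t * a _"]
        sum.delta)
  with assms(4) have "(\<Sum>j<R. q j * a j) = 0" by simp
  moreover have "\<forall>j<R. q j \<in> \<rat>"
    by (simp add: q_def)
  ultimately have "q j = 0"
    using assms(1,5) unfolding rationally_independent_def by blast
  then show ?thesis
    by (auto simp: q_def split: if_splits)
qed

lemma ihdr_decode_eq_if_coeffs_vanish:
  assumes "rationally_independent a R" "\<forall>i<p. jf i < R \<and> beta i = a (jf i)"
    and "\<forall>i<p. ihdr_coeff R a beta m i = 0" "\<exists>n<p * R + 1. m n \<noteq> 0" "i < p"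
  shows "ihdr_decode R a m i = beta i"
proof -
  have block: "m (1 + i' * R + j) = (if j = jf i' then - m 0 else 0)" if "i' < p" "j < R" for i' j
  proof -
    have "jf i' < R" "beta i' = a (jf i')"
      using assms(2) that by auto
    then show ?thesis
      by (rule ihdr_coeff_eq_0_block[OF assms(1)]) (use assms(3) that in simp_all)
  qed
  have "m 0 \<noteq> 0"
  proof
    assume "m 0 = 0"
    from assms(4) obtain n where "n < p * R + 1" "m n \<noteq> 0" by blast
    then show False
      using \<open>m 0 = 0\<close> block by (cases rule: ihdr_input_index_cases) (auto split: if_splits)
  qed
  moreover have "(LEAST j. j < R \<and> m (1 + i * R + j) \<noteq> 0) = jf i"
    using assms(2,5) block \<open>m 0 \<noteq> 0\<close>
    by (intro Least_equality) (auto simp: not_le split: if_splits)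
  ultimately show ?thesis
    using assms(2,5) by (simp add: ihdr_decode_def)
qed

lemma AE_ihdr_decode_int_relations:
  fixes X :: "'w \<Rightarrow> nat \<Rightarrow> real"
  assumes "distributed M (PiM {..<p} (\<lambda>_. lborel)) X f"
    and "rationally_independent a R" "\<forall>i<p. jf i < R \<and> beta i = a (jf i)"
  shows "AE \<omega> in M. \<forall>m. is_int_relation (ihdr_input p R a (\<Sum>i<p. X \<omega> i * beta i) (X \<omega>)) (p * R + 1) m
           \<longrightarrow> (\<forall>i<p. ihdr_decode R a m i = beta i)"
proof -
  let ?K = "{..<p * R + 1}"
  \<comment> \<open>\<open>c(m)\<close> only depends on \<open>m\<close> restricted to \<open>?K\<close>, which ranges over a countable set.\<close>
  have "countable (ihdr_coeff R a beta ` PiE ?K (\<lambda>_. UNIV :: int set))"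
    by (intro countable_image countable_PiE) auto
  with assms(1) have "AE \<omega> in M. \<forall>c\<in>ihdr_coeff R a beta ` PiE ?K (\<lambda>_. UNIV).
      (\<Sum>i<p. X \<omega> i * c i) = 0 \<longrightarrow> (\<forall>i<p. c i = 0)"
    by (auto dest: AE_distributed_linear_forms_vanish)
  then show ?thesis
  proof (rule eventually_mono, intro allI impI)
    fix \<omega> m i
    assume vanish: "\<forall>c\<in>ihdr_coeff R a beta ` PiE ?K (\<lambda>_. UNIV).
        (\<Sum>i<p. X \<omega> i * c i) = 0 \<longrightarrow> (\<forall>i<p. c i = 0)"
      and rel: "is_int_relation (ihdr_input p R a (\<Sum>i<p. X \<omega> i * beta i) (X \<omega>)) (p * R + 1) m"
      and "i < p"
    have "(\<Sum>i<p. X \<omega> i * ihdr_coeff R a beta m i) = 0"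
      using rel unfolding is_int_relation_def sum_ihdr_input_eq_linear_form by simp
    moreover have restrict_eq: "ihdr_coeff R a beta (restrict m ?K) i = ihdr_coeff R a beta m i"
      if "i < p" for i
      using that by (rule ihdr_coeff_restrict)
    ultimately have "(\<Sum>i<p. X \<omega> i * ihdr_coeff R a beta (restrict m ?K) i) = 0"
      by simp
    moreover have "ihdr_coeff R a beta (restrict m ?K) \<in> ihdr_coeff R a beta ` PiE ?K (\<lambda>_. UNIV)"
      using restrict_PiE_iff[of m ?K "\<lambda>_. UNIV"] by blast
    ultimately have "\<forall>i<p. ihdr_coeff R a beta (restrict m ?K) i = 0"
      using vanish by blast
    then have "\<forall>i<p. ihdr_coeff R a beta m i = 0"
      using restrict_eq by metis
    moreover have "\<exists>n<p * R + 1. m n \<noteq> 0"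
      using rel by (simp add: is_int_relation_def)
    ultimately show "ihdr_decode R a m i = beta i"
      using ihdr_decode_eq_if_coeffs_vanish[OF assms(2,3)] \<open>i < p\<close> by blast
  qed
qed

definition ihdr_relation :: "nat \<Rightarrow> (nat \<Rightarrow> nat) \<Rightarrow> nat \<Rightarrow> int" where
  "ihdr_relation R jf n =
     (if n = 0 then -1 else if (n - 1) mod R = jf ((n - 1) div R) then 1 else 0)"

lemma is_int_relation_ihdr_relation:
  assumes "\<forall>i<p. jf i < R \<and> beta i = a (jf i)"
  shows "is_int_relation (ihdr_input p R a (\<Sum>i<p. x i * beta i) x) (p * R + 1) (ihdr_relation R jf)"
proof -
  have "ihdr_coeff R a beta (ihdr_relation R jf) i = 0" if "i < p" for i
  proof -
    have "(\<Sum>j<R. of_int (ihdr_relation R jf (1 + i * R + j)) * a j)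
        = (\<Sum>j<R. if j = jf i then a j else 0)"
      by (intro sum.cong) (auto simp: ihdr_relation_def)
    also have "\<dots> = beta i"
      using assms that by simp
    finally show ?thesis
      by (simp add: ihdr_coeff_def ihdr_relation_def)
  qed
  moreover have "ihdr_relation R jf 0 \<noteq> 0"
    by (simp add: ihdr_relation_def)
  ultimately show ?thesis
    unfolding is_int_relation_def sum_ihdr_input_eq_linear_form by auto
qed

lemma min_relation_norm_le:
  assumes "is_int_relation b k m"
  shows "min_relation_norm b k \<le> sqrt (\<Sum>i<k. (of_int (m i))\<^sup>2)"
  unfolding min_relation_norm_def
proof (rule cInf_lower)
  show "bdd_below {sqrt (\<Sum>i<k. (of_int (m i))\<^sup>2) | m. is_int_relation b k m}"
    by (auto intro!: bdd_belowI[of _ 0] sum_nonneg)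
qed (use assms in auto)

lemma one_le_min_relation_norm:
  assumes "has_int_relation b k"
  shows "1 \<le> min_relation_norm b k"
  unfolding min_relation_norm_def
proof (rule cInf_greatest)
  show "{sqrt (\<Sum>i<k. (of_int (m i))\<^sup>2) | m. is_int_relation b k m} \<noteq> {}"
    using assms by (simp add: has_int_relation_def)
next
  fix s assume "s \<in> {sqrt (\<Sum>i<k. (of_int (m i))\<^sup>2) | m. is_int_relation b k m}"
  then obtain m i where s: "s = sqrt (\<Sum>i<k. (of_int (m i))\<^sup>2)" and "i < k" "m i \<noteq> 0"
    by (auto simp: is_int_relation_def)
  then have "1 \<le> \<bar>of_int (m i) :: real\<bar>"
    by (simp flip: of_int_abs)
  then have "1 \<le> (of_int (m i) :: real)\<^sup>2"
    by (simp add: abs_le_square_iff[of 1, simplified])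
  also have "\<dots> \<le> (\<Sum>i<k. (of_int (m i))\<^sup>2)"
    using \<open>i < k\<close> by (intro member_le_sum) auto
  finally show "1 \<le> s"
    using s by simp
qed

lemma ln_min_relation_norm_le:
  assumes "is_int_relation b k m" "\<forall>i<k. \<bar>m i\<bar> \<le> 1"
  shows "ln (min_relation_norm b k) \<le> real k"
proof -
  have "(\<Sum>i<k. (of_int (m i) :: real)\<^sup>2) \<le> (\<Sum>i<k. 1)"
    using assms(2) by (intro sum_mono) (simp add: abs_square_le_1 flip: of_int_abs)
  then have "sqrt (\<Sum>i<k. (of_int (m i))\<^sup>2) \<le> sqrt (real k)"
    by simp
  with min_relation_norm_le[OF assms(1)] have "min_relation_norm b k \<le> sqrt (real k)"
    by linarith
  also have "\<dots> \<le> real k"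
    by (cases k) (auto intro!: real_le_lsqrt simp: power2_eq_square)
  finally have "min_relation_norm b k \<le> real k" .
  moreover have "0 < min_relation_norm b k"
    using one_le_min_relation_norm assms(1) has_int_relation_def by fastforce
  ultimately show ?thesis
    using ln_le_minus_one[of "min_relation_norm b k"] by linarith
qed

lemma IRA_cost_le:
  assumes "is_IRA ira ira_cost C" "0 \<le> C" "is_int_relation b k m" "\<forall>i<k. \<bar>m i\<bar> \<le> 1"
  shows "ira_cost b k \<le> 2 * C * real k ^ 3"
proof -
  have "ira_cost b k \<le> C * (real k ^ 3 + (real k)\<^sup>2 * ln (min_relation_norm b k))"
    using assms(1,3) unfolding is_IRA_def has_int_relation_def by blast
  also have "\<dots> \<le> C * (real k ^ 3 + (real k)\<^sup>2 * real k)"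
    using ln_min_relation_norm_le[OF assms(3,4)] assms(2)
    by (intro mult_left_mono add_left_mono) auto
  finally show ?thesis
    by (simp add: power2_eq_square power3_eq_cube)
qed

theorem theorem5:
  fixes M :: "'w measure" and X :: "'w \<Rightarrow> nat \<Rightarrow> real"
    and f :: "(nat \<Rightarrow> real) \<Rightarrow> ennreal"
    and p R :: nat and a beta :: "nat \<Rightarrow> real"
    and ira :: "(nat \<Rightarrow> real) \<Rightarrow> nat \<Rightarrow> (nat \<Rightarrow> int)"
    and ira_cost :: "(nat \<Rightarrow> real) \<Rightarrow> nat \<Rightarrow> real" and C :: real
  assumes "prob_space M"
    and "distributed M (PiM {..<p} (\<lambda>_. lborel)) X f"
    and "rationally_independent a R"
    and "\<forall>i<p. \<exists>j<R. beta i = a j"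
    and "0 < C" and "is_IRA ira ira_cost C"
  shows "(AE \<omega> in M. \<forall>i<p.
            ihdr ira p R a (\<Sum>i<p. X \<omega> i * beta i) (X \<omega>) i = beta i)
       \<and> (\<forall>\<omega>\<in>space M.
            ihdr_cost ira_cost p R a (\<Sum>i<p. X \<omega> i * beta i) (X \<omega>)
              \<le> (2 * C + 2) * real (p * R + 1) ^ 3)"
proof -
  obtain jf where jf: "\<forall>i<p. jf i < R \<and> beta i = a (jf i)"
    using assms(4) by metis
  define b where "b \<omega> = ihdr_input p R a (\<Sum>i<p. X \<omega> i * beta i) (X \<omega>)" for \<omega>
  let ?k = "p * R + 1"
  have rel: "is_int_relation (b \<omega>) ?k (ihdr_relation R jf)" for \<omega>
    unfolding b_def using jf by (rule is_int_relation_ihdr_relation)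
  then have ira_rel: "is_int_relation (b \<omega>) ?k (ira (b \<omega>) ?k)" for \<omega>
    using assms(6) unfolding is_IRA_def has_int_relation_def by blast
  have "AE \<omega> in M. \<forall>i<p. ihdr ira p R a (\<Sum>i<p. X \<omega> i * beta i) (X \<omega>) i = beta i"
    using AE_ihdr_decode_int_relations[OF assms(2,3) jf]
    by (rule eventually_mono) (use ira_rel in \<open>simp add: ihdr_def b_def\<close>)
  moreover have "ihdr_cost ira_cost p R a (\<Sum>i<p. X \<omega> i * beta i) (X \<omega>)
      \<le> (2 * C + 2) * real ?k ^ 3" for \<omega>
  proof -
    have "ira_cost (b \<omega>) ?k \<le> 2 * C * real ?k ^ 3"
      using IRA_cost_le[OF assms(6) _ rel] assms(5) by (simp add: ihdr_relation_def)
    moreover have "real (p * R) \<le> real ?k ^ 3"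
      using self_le_power[of "real ?k" 3] by simp
    ultimately show ?thesis
      unfolding ihdr_cost_def b_def[symmetric] by (simp add: algebra_simps)
  qed
  ultimately show ?thesis by blast
qed

end
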